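(* Let $(\mathbf{P}_t)_{t\ge0}$ be a continuous-time Markov process on a countable state space $\mathcal{S}$ with stable conservative $Q$-matrix, and suppose it is reversible with respect to a positive measure $\mu$ on $\mathcal{S}$ (i.e. $\mu_ip_{ij}(t)=\mu_jp_{ji}(t)$ for all $i,j,t$). Then it is initial-state identifiable: for every $t\in[0,\infty)$, the rows $\mathbf{p}^i(t)$, $i\in\mathcal{S}$, of $\mathbf{P}_t$ are pairwise distinct.
   Context: $\mathbf{P}_t=(p_{ij}(t))$ is the transition matrix at time $t$ and $\mathbf{p}^i(t)=(p_{i1}(t),p_{i2}(t),\dots)$ its $i$-th row. Stable conservative $Q$-matrix: $q_{ij}=p'_{ij}(0)\in[0,\infty)$ for $i\ne j$ and $q_i=-q_{ii}=\sum_{j\ne i}q_{ij}<\infty$. *)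

theory Defs
  imports "HOL-Analysis.Analysis"
begin

definition transition_function :: "(real \<Rightarrow> 'a::countable \<Rightarrow> 'a \<Rightarrow> real) \<Rightarrow> bool" where
  "transition_function P \<longleftrightarrow>
     (\<forall>t\<ge>0. \<forall>i j. P t i j \<ge> 0) \<and>
     (\<forall>t\<ge>0. \<forall>i. ((\<lambda>j. P t i j) has_sum 1) UNIV) \<and>
     (\<forall>i j. P 0 i j = (if i = j then 1 else 0)) \<and>
     (\<forall>s\<ge>0. \<forall>t\<ge>0. \<forall>i j. ((\<lambda>k. P s i k * P t k j) has_sum P (s + t) i j) UNIV)"

definition stable_conservative_Q :: "(real \<Rightarrow> 'a::countable \<Rightarrow> 'a \<Rightarrow> real) \<Rightarrow> bool" where
  "stable_conservative_Q P \<longleftrightarrow>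
     (\<exists>Q :: 'a \<Rightarrow> 'a \<Rightarrow> real.
        (\<forall>i j. ((\<lambda>t. P t i j) has_real_derivative Q i j) (at_right 0)) \<and>
        (\<forall>i. ((\<lambda>j. if j = i then 0 else Q i j) has_sum (- Q i i)) UNIV))"

definition reversible_wrt :: "(real \<Rightarrow> 'a \<Rightarrow> 'a \<Rightarrow> real) \<Rightarrow> ('a \<Rightarrow> real) \<Rightarrow> bool" where
  "reversible_wrt P \<mu> \<longleftrightarrow> (\<forall>t\<ge>0. \<forall>i j. \<mu> i * P t i j = \<mu> j * P t j i)"

end

theory Submission
  imports Defs
begin

text \<open>Reversibility makes the Chapman-Kolmogorov square of \<open>P\<^sub>s\<close> a Gram matrix: the
  \<open>1/\<mu>\<close>-weighted squared distance of two rows of \<open>P\<^sub>s\<close> is a combination of entries of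
  \<open>P\<^sub>2\<^sub>s\<close>, and it vanishes when the corresponding rows of \<open>P\<^sub>2\<^sub>s\<close> agree. Hence equal rows
  at time \<open>t\<close> give equal rows at every time \<open>t/2\<^sup>n\<close>. Letting \<open>n \<rightarrow> \<infinity>\<close>, continuity at \<open>0\<close>
  (a consequence of the existence of the Q-matrix) forces the rows of \<open>P\<^sub>0 = I\<close> to agree,
  which is absurd.\<close>

lemma reversible_row_distance_has_sum:
  fixes P :: "real \<Rightarrow> 'a::countable \<Rightarrow> 'a \<Rightarrow> real" and \<mu> :: "'a \<Rightarrow> real"
  assumes TF: "transition_function P"
    and pos: "\<forall>i. \<mu> i > 0"
    and rev: "reversible_wrt P \<mu>"
    and s: "s \<ge> 0"
  shows "((\<lambda>k. (P s i k - P s j k)\<^sup>2 / \<mu> k) has_sum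
           (P (s + s) i i / \<mu> i - 2 * P (s + s) i j / \<mu> j + P (s + s) j j / \<mu> j)) UNIV"
proof -
  have CK: "((\<lambda>k. P s a k * P s k b) has_sum P (s + s) a b) UNIV" for a b
    using TF s unfolding transition_function_def by blast
  have swap: "P s b a = \<mu> a * P s a b / \<mu> b" for a b
    using rev s pos unfolding reversible_wrt_def
    by (metis nonzero_mult_div_cancel_left order_less_irrefl)
  have expand: "(P s i k - P s j k)\<^sup>2 / \<mu> k =
      (1 / \<mu> i) * (P s i k * P s k i) + (- (2 / \<mu> j)) * (P s i k * P s k j)
      + (1 / \<mu> j) * (P s j k * P s k j)" for k
  proof -
    have "\<mu> i > 0" "\<mu> j > 0" "\<mu> k > 0" using pos by auto
    then show ?thesis
      unfolding swap[of i k] swap[of j k] by (simp add: field_simps power2_eq_square)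
  qed
  have "((\<lambda>k. (P s i k - P s j k)\<^sup>2 / \<mu> k) has_sum
          ((1 / \<mu> i) * P (s + s) i i + (- (2 / \<mu> j)) * P (s + s) i j
           + (1 / \<mu> j) * P (s + s) j j)) UNIV"
    unfolding expand by (intro has_sum_add has_sum_cmult_right CK)
  then show ?thesis by simp
qed

lemma reversible_rows_eq_half_time:
  fixes P :: "real \<Rightarrow> 'a::countable \<Rightarrow> 'a \<Rightarrow> real" and \<mu> :: "'a \<Rightarrow> real"
  assumes TF: "transition_function P"
    and pos: "\<forall>i. \<mu> i > 0"
    and rev: "reversible_wrt P \<mu>"
    and s: "s \<ge> 0"
    and rows_eq: "P (s + s) i = P (s + s) j"
  shows "P s i = P s j"
proof
  fix k
  have "\<mu> i * P (s + s) i j = \<mu> j * P (s + s) j i"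
    using rev s unfolding reversible_wrt_def by simp
  moreover have "P (s + s) i i = P (s + s) j i" "P (s + s) j j = P (s + s) i j"
    using fun_cong[OF rows_eq, of i] fun_cong[OF rows_eq, of j] by simp_all
  ultimately have "P (s + s) i i / \<mu> i - 2 * P (s + s) i j / \<mu> j + P (s + s) j j / \<mu> j = 0"
    using pos[rule_format, of i] pos[rule_format, of j] by (simp add: field_simps)
  then have "((\<lambda>k. (P s i k - P s j k)\<^sup>2 / \<mu> k) has_sum 0) UNIV"
    using reversible_row_distance_has_sum[OF TF pos rev s, of i j] by simp
  moreover have "(P s i l - P s j l)\<^sup>2 / \<mu> l \<ge> 0" for l
    using pos[rule_format, of l] by simp
  ultimately have "(P s i k - P s j k)\<^sup>2 / \<mu> k = 0"
    by (intro nonneg_has_sum_le_0D[where A = UNIV]) auto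
  then show "P s i k = P s j k"
    using pos[rule_format, of k] by simp
qed

lemma reversible_rows_eq_dyadic_time:
  fixes P :: "real \<Rightarrow> 'a::countable \<Rightarrow> 'a \<Rightarrow> real" and \<mu> :: "'a \<Rightarrow> real"
  assumes TF: "transition_function P"
    and pos: "\<forall>i. \<mu> i > 0"
    and rev: "reversible_wrt P \<mu>"
    and t: "t \<ge> 0"
    and rows_eq: "P t i = P t j"
  shows "P (t / 2 ^ n) i = P (t / 2 ^ n) j"
proof (induction n)
  case 0
  then show ?case using rows_eq by simp
next
  case (Suc n)
  have "t / 2 ^ Suc n + t / 2 ^ Suc n = t / 2 ^ n"
    by (simp add: field_simps)
  with Suc have "P (t / 2 ^ Suc n + t / 2 ^ Suc n) i = P (t / 2 ^ Suc n + t / 2 ^ Suc n) j"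
    by simp
  moreover have "t / 2 ^ Suc n \<ge> 0"
    using t by simp
  ultimately show ?case
    using reversible_rows_eq_half_time[OF TF pos rev] by blast
qed

lemma stable_conservative_Q_tendsto_at_right_0:
  assumes "stable_conservative_Q P"
  shows "((\<lambda>t. P t i j) \<longlongrightarrow> P 0 i j) (at_right 0)"
proof -
  obtain Q where "((\<lambda>t. P t i j) has_real_derivative Q i j) (at_right 0)"
    using assms unfolding stable_conservative_Q_def by blast
  then have "continuous (at_right 0) (\<lambda>t. P t i j)"
    by (rule DERIV_continuous)
  then show ?thesis
    by (simp add: continuous_within)
qed

lemma dyadic_times_tendsto_at_right_0:
  fixes t :: real
  assumes "t > 0"
  shows "filterlim (\<lambda>n. t / 2 ^ n) (at_right 0) sequentially"
proof (rule filterlim_at_withinI)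
  show "(\<lambda>n. t / 2 ^ n) \<longlonglongrightarrow> 0"
    by (rule LIMSEQ_divide_realpow_zero) simp
  show "\<forall>\<^sub>F n in sequentially. t / 2 ^ n \<in> {0<..} - {0}"
    using assms by (intro always_eventually) simp
qed

theorem mainTheorem11:
  fixes P :: "real \<Rightarrow> 'a::countable \<Rightarrow> 'a \<Rightarrow> real" and \<mu> :: "'a \<Rightarrow> real"
  assumes "transition_function P"
    and "stable_conservative_Q P"
    and "\<forall>i. \<mu> i > 0"
    and "reversible_wrt P \<mu>"
  shows "\<forall>t\<ge>0. \<forall>i j. i \<noteq> j \<longrightarrow> (\<lambda>k. P t i k) \<noteq> (\<lambda>k. P t j k)"
proof (intro allI impI notI)
  fix t :: real and i j :: 'a
  assume t: "t \<ge> 0" and ij: "i \<noteq> j" and "(\<lambda>k. P t i k) = (\<lambda>k. P t j k)"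
  then have "P t i = P t j" by simp
  then have rows_eq: "P (t / 2 ^ n) i = P (t / 2 ^ n) j" for n
    by (rule reversible_rows_eq_dyadic_time[OF assms(1,3,4) t])
  have P0: "P 0 a b = (if a = b then 1 else 0)" for a b
    using assms(1) unfolding transition_function_def by blast
  show False
  proof (cases "t = 0")
    case True
    then have "P 0 i i = P 0 j i"
      using rows_eq[of 0] by simp
    then show False using P0 ij by simp
  next
    case False
    then have lim: "filterlim (\<lambda>n. t / 2 ^ n) (at_right 0) sequentially"
      using t by (intro dyadic_times_tendsto_at_right_0) simp
    have entry_tendsto: "(\<lambda>n. P (t / 2 ^ n) a b) \<longlonglongrightarrow> P 0 a b" for a b
      using filterlim_compose[OF stable_conservative_Q_tendsto_at_right_0[OF assms(2)] lim] .
    have "(\<lambda>n. P (t / 2 ^ n) i i) \<longlonglongrightarrow> 1"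
      using entry_tendsto[of i i] P0 by simp
    moreover have "(\<lambda>n. P (t / 2 ^ n) i i) \<longlonglongrightarrow> 0"
      using entry_tendsto[of j i] P0 rows_eq ij by simp
    ultimately show False
      using LIMSEQ_unique by fastforce
  qed
qed

end
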